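(* Let $\nu$ be a PLNN with semantics $\llbracket\nu\rrbracket\colon\mathbb{R}^n\to\mathbb{R}^m$, let $\vec p_1,\dots,\vec p_n$ be the principal components of a dataset, let $0<k<n$, and let $\rho_k\colon\mathbb{R}^n\to\mathbb{R}^k$, $\rho_k(\vec x)=(\langle\vec p_1,\vec x\rangle,\dots,\langle\vec p_k,\vec x\rangle)^\top$, and $\theta_k\colon\mathbb{R}^k\to\mathbb{R}^n$, $\theta_k(r_1,\dots,r_k)=\sum_{i=1}^k r_i\vec p_i$. Define the classifiers $\nu'_r=\operatorname{argmax}\circ\llbracket\nu\rrbracket\circ\theta_k\colon\mathbb{R}^k\to\{1,\dots,m\}$ and $\nu_r=\operatorname{argmax}\circ\llbracket\nu\rrbracket\circ\theta_k\circ\rho_k\colon\mathbb{R}^n\to\{1,\dots,m\}$. Let $\vec x\in\mathbb{R}^n$, $\epsilon>0$, and $\delta=\epsilon\max_{1\le i\le k}\|\vec p_i\|_1$ (so that $\delta\le\epsilon\sqrt n$). If $\nu'_r$ is $\delta$-robust around $\rho_k(\vec x)$, then $\nu_r$ is $\epsilon$-robust around $\vec x$.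
   Context: A PLNN with semantics $\llbracket\nu\rrbracket=\alpha_{l+1}\circ\phi\circ\alpha_l\circ\dots\circ\phi\circ\alpha_1$ is an alternating composition of affine maps $\alpha_i$ and componentwise ReLU $\phi(x)=\max(0,x)$. $\operatorname{argmax}(x_1,\dots,x_m)$ is the smallest index $j$ with $x_j\ge x_i$ for all $i$. For a zero-mean dataset $D\subset\mathbb{R}^n$, the principal components $\vec p_1,\dots,\vec p_n$ are defined iteratively: $\vec p_i$ maximizes $\sum_{\vec d\in D}\langle\vec p_i,\vec d\rangle^2$ subject to $\|\vec p_i\|_2=1$ and $\langle\vec p_i,\vec p_h\rangle=0$ for $h<i$. A classifier $c\colon\mathbb{R}^d\to\{1,\dots,m\}$ is $\eta$-robust around $\vec z$ if there is no $\vec w\in\mathbb{R}^d$ with $\|\vec w-\vec z\|_\infty\le\eta$ and $c(\vec w)\ne c(\vec z)$. *)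

theory Defs
  imports Complex_Main
begin

(* Vectors in R^d are represented as real lists of length d (component i is xs ! (i-1)). *)

type_synonym vec = "real list"

definition inner_l :: "vec \<Rightarrow> vec \<Rightarrow> real" where
  "inner_l u v = sum_list (map2 (*) u v)"

definition norm2_l :: "vec \<Rightarrow> real" where
  "norm2_l u = sqrt (inner_l u u)"

definition norm1_l :: "vec \<Rightarrow> real" where
  "norm1_l u = sum_list (map abs u)"

(* an affine layer x |-> W x + b, W given by its list of rows *)
type_synonym layer = "real list list \<times> real list"

definition affine :: "layer \<Rightarrow> vec \<Rightarrow> vec" where
  "affine L x = map2 (\<lambda>row bi. inner_l row x + bi) (fst L) (snd L)"

definition relu :: "vec \<Rightarrow> vec" where
  "relu x = map (\<lambda>t. max 0 t) x"

fun plnn_sem :: "layer list \<Rightarrow> vec \<Rightarrow> vec" where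
  "plnn_sem [] x = x"
| "plnn_sem [L] x = affine L x"
| "plnn_sem (L # L' # Ls) x = plnn_sem (L' # Ls) (relu (affine L x))"

fun plnn_wf :: "nat \<Rightarrow> nat \<Rightarrow> layer list \<Rightarrow> bool" where
  "plnn_wf din dout [] = False"
| "plnn_wf din dout [L] =
     (length (fst L) = dout \<and> length (snd L) = dout \<and> (\<forall>row\<in>set (fst L). length row = din))"
| "plnn_wf din dout (L # L' # Ls) =
     (length (snd L) = length (fst L) \<and> (\<forall>row\<in>set (fst L). length row = din)
      \<and> plnn_wf (length (fst L)) dout (L' # Ls))"

definition argmax :: "vec \<Rightarrow> nat" where
  "argmax xs = (LEAST j. 1 \<le> j \<and> j \<le> length xs \<and>
                   (\<forall>i\<in>{1..length xs}. xs ! (i - 1) \<le> xs ! (j - 1)))"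

definition zero_mean :: "nat \<Rightarrow> vec set \<Rightarrow> bool" where
  "zero_mean n D = (finite D \<and> (\<forall>d\<in>D. length d = n) \<and>
                    (\<forall>j<n. (\<Sum>d\<in>D. d ! j) = 0))"

definition principal_components :: "nat \<Rightarrow> vec set \<Rightarrow> (nat \<Rightarrow> vec) \<Rightarrow> bool" where
  "principal_components n D p = (\<forall>i\<in>{1..n}.
      length (p i) = n \<and> norm2_l (p i) = 1 \<and> (\<forall>h\<in>{1..<i}. inner_l (p i) (p h) = 0) \<and>
      (\<forall>q. length q = n \<and> norm2_l q = 1 \<and> (\<forall>h\<in>{1..<i}. inner_l q (p h) = 0) \<longrightarrow>
           (\<Sum>d\<in>D. (inner_l q d)^2) \<le> (\<Sum>d\<in>D. (inner_l (p i) d)^2)))"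

definition rho :: "(nat \<Rightarrow> vec) \<Rightarrow> nat \<Rightarrow> vec \<Rightarrow> vec" where
  "rho p k x = map (\<lambda>i. inner_l (p i) x) [1..<k+1]"

definition theta :: "(nat \<Rightarrow> vec) \<Rightarrow> nat \<Rightarrow> nat \<Rightarrow> vec \<Rightarrow> vec" where
  "theta p n k r = map (\<lambda>j. \<Sum>i=1..k. r ! (i - 1) * p i ! j) [0..<n]"

definition robust :: "(vec \<Rightarrow> nat) \<Rightarrow> nat \<Rightarrow> real \<Rightarrow> vec \<Rightarrow> bool" where
  "robust c d eta z = (\<not> (\<exists>w. length w = d \<and> (\<forall>i<d. \<bar>w ! i - z ! i\<bar> \<le> eta) \<and> c w \<noteq> c z))"

end

theory Submission
  imports Defs
begin

(* Each coordinate of \<rho>_k is the functional <p_i, -> whose change under an \<epsilon>-perturbation in the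
   maximum norm is, by Hoelder's inequality, at most \<epsilon> \<parallel>p_i\<parallel>_1 \<le> \<delta>. Hence \<rho>_k maps the \<epsilon>-box around x
   into the \<delta>-box around \<rho>_k(x), on which \<nu>'_r is constant; as \<nu>_r = \<nu>'_r \<circ> \<rho>_k, it is constant on
   the \<epsilon>-box around x. Nothing about the network or the optimality of the components is used. *)

lemma inner_l_conv_sum:
  assumes "length v = length u"
  shows "inner_l u v = (\<Sum>i<length u. u ! i * v ! i)"
  using assms by (simp add: inner_l_def sum_list_sum_nth atLeast0LessThan)

lemma norm1_l_conv_sum: "norm1_l u = (\<Sum>i<length u. \<bar>u ! i\<bar>)"
  by (simp add: norm1_l_def sum_list_sum_nth atLeast0LessThan)

lemma inner_l_diff_le_norm1_l:
  assumes "length w = length a" and "length x = length a"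
    and "\<forall>i<length a. \<bar>w ! i - x ! i\<bar> \<le> e"
  shows "\<bar>inner_l a w - inner_l a x\<bar> \<le> e * norm1_l a"
proof -
  have "\<bar>inner_l a w - inner_l a x\<bar> = \<bar>\<Sum>i<length a. a ! i * (w ! i - x ! i)\<bar>"
    using assms(1,2) by (simp add: inner_l_conv_sum sum_subtractf right_diff_distrib)
  also have "\<dots> \<le> (\<Sum>i<length a. \<bar>a ! i\<bar> * \<bar>w ! i - x ! i\<bar>)"
    by (rule order_trans[OF sum_abs]) (simp add: abs_mult)
  also have "\<dots> \<le> (\<Sum>i<length a. \<bar>a ! i\<bar> * e)"
    using assms(3) by (intro sum_mono mult_left_mono) auto
  also have "\<dots> = e * norm1_l a"
    by (simp add: norm1_l_conv_sum sum_distrib_left mult.commute)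
  finally show ?thesis .
qed

lemma rho_nth_diff_le:
  assumes "\<And>i. i \<in> {1..k} \<Longrightarrow> length (p i) = length x"
    and "length w = length x" and "\<forall>j<length x. \<bar>w ! j - x ! j\<bar> \<le> \<epsilon>" and "0 \<le> \<epsilon>"
    and "i < k"
  shows "\<bar>rho p k w ! i - rho p k x ! i\<bar> \<le> \<epsilon> * Max (norm1_l ` p ` {1..k})"
proof -
  have i: "Suc i \<in> {1..k}" using assms(5) by simp
  have "\<bar>rho p k w ! i - rho p k x ! i\<bar> = \<bar>inner_l (p (Suc i)) w - inner_l (p (Suc i)) x\<bar>"
    using assms(5) by (simp add: rho_def del: upt_Suc)
  also have "\<dots> \<le> \<epsilon> * norm1_l (p (Suc i))"
    using assms(1)[OF i] assms(2,3) by (intro inner_l_diff_le_norm1_l) auto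
  also have "\<dots> \<le> \<epsilon> * Max (norm1_l ` p ` {1..k})"
    using i assms(4) by (intro mult_left_mono Max_ge) auto
  finally show ?thesis .
qed

lemma robust_comp:
  assumes "robust c d \<delta> (f z)"
    and "\<And>w. length w = n \<Longrightarrow> \<forall>i<n. \<bar>w ! i - z ! i\<bar> \<le> \<epsilon> \<Longrightarrow>
           length (f w) = d \<and> (\<forall>i<d. \<bar>f w ! i - f z ! i\<bar> \<le> \<delta>)"
  shows "robust (\<lambda>w. c (f w)) n \<epsilon> z"
  using assms unfolding robust_def by metis

theorem mainTheorem4:
  fixes N :: "layer list" and n m k :: nat and D :: "vec set" and p :: "nat \<Rightarrow> vec"
    and x :: vec and \<epsilon> :: real
  assumes "plnn_wf n m N" and "1 \<le> m"
    and "zero_mean n D" and "principal_components n D p"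
    and "0 < k" and "k < n"
    and "length x = n" and "\<epsilon> > 0"
    and "robust (\<lambda>r. argmax (plnn_sem N (theta p n k r))) k
           (\<epsilon> * Max (norm1_l ` p ` {1..k})) (rho p k x)"
  shows "robust (\<lambda>w. argmax (plnn_sem N (theta p n k (rho p k w)))) n \<epsilon> x"
proof (rule robust_comp[where f = "rho p k" and z = x, OF assms(9)])
  have length_p: "length (p i) = length x" if "i \<in> {1..k}" for i
    using assms(4,6,7) that unfolding principal_components_def by auto
  fix w :: vec
  assume "length w = n" and "\<forall>i<n. \<bar>w ! i - x ! i\<bar> \<le> \<epsilon>"
  then show "length (rho p k w) = k \<and>
      (\<forall>i<k. \<bar>rho p k w ! i - rho p k x ! i\<bar> \<le> \<epsilon> * Max (norm1_l ` p ` {1..k}))"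
    using length_p assms(7,8) rho_nth_diff_le[of k p x w \<epsilon>] by (simp add: rho_def)
qed

end
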